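(* $f_3(5,4)=\frac{16}{7}=\rho_3(G^* )$, where $G^*$ is the $7$-vertex graph obtained from $K_6$ by deleting the two edges of a matching $\{wx,yz\}$ and adding a new vertex adjacent exactly to $w,x,y,z$.
   Context: $\mathcal{G}(\Delta,\omega)$ denotes the class of finite simple graphs $G$ with maximum degree $\Delta(G)\le\Delta$ and clique number $\omega(G)\le\omega$. $k_t(G)$ is the number of copies of $K_t$ in $G$ and $\rho_t(G)=k_t(G)/|V(G)|$. $f_t(\Delta,\omega)=\sup\{\rho_t(G): G\in\mathcal{G}(\Delta,\omega),\ |V(G)|\ge 1\}$. *)

theory Defs
  imports Complex_Main
begin

(* A finite simple graph on vertex set V with edge set E (edges are 2-element subsets of V).
   Vertices are taken from nat: every finite graph is isomorphic to one on nat vertices. *)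
definition simple_graph :: "nat set \<Rightarrow> nat set set \<Rightarrow> bool" where
  "simple_graph V E \<longleftrightarrow> finite V \<and> (\<forall>e\<in>E. e \<subseteq> V \<and> card e = 2)"

definition degree :: "nat set \<Rightarrow> nat set set \<Rightarrow> nat \<Rightarrow> nat" where
  "degree V E v = card {u \<in> V. {u, v} \<in> E}"

definition max_degree_le :: "nat set \<Rightarrow> nat set set \<Rightarrow> nat \<Rightarrow> bool" where
  "max_degree_le V E d \<longleftrightarrow> (\<forall>v\<in>V. degree V E v \<le> d)"

definition is_clique :: "nat set \<Rightarrow> nat set set \<Rightarrow> nat set \<Rightarrow> bool" where
  "is_clique V E S \<longleftrightarrow> S \<subseteq> V \<and> (\<forall>u\<in>S. \<forall>v\<in>S. u \<noteq> v \<longrightarrow> {u, v} \<in> E)"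

definition clique_number_le :: "nat set \<Rightarrow> nat set set \<Rightarrow> nat \<Rightarrow> bool" where
  "clique_number_le V E w \<longleftrightarrow> (\<forall>S. is_clique V E S \<longrightarrow> card S \<le> w)"

definition graph_class :: "nat \<Rightarrow> nat \<Rightarrow> nat set \<Rightarrow> nat set set \<Rightarrow> bool" where
  "graph_class D w V E \<longleftrightarrow> simple_graph V E \<and> max_degree_le V E D \<and> clique_number_le V E w"

definition k_count :: "nat \<Rightarrow> nat set \<Rightarrow> nat set set \<Rightarrow> nat" where
  "k_count t V E = card {S. is_clique V E S \<and> card S = t}"

definition rho :: "nat \<Rightarrow> nat set \<Rightarrow> nat set set \<Rightarrow> real" where
  "rho t V E = real (k_count t V E) / real (card V)"

definition f_sup :: "nat \<Rightarrow> nat \<Rightarrow> nat \<Rightarrow> real" where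
  "f_sup t D w = Sup {rho t V E | V E. graph_class D w V E \<and> card V \<ge> 1}"

definition Gstar_V :: "nat set" where
  "Gstar_V = {0..6}"

definition Gstar_E :: "nat set set" where
  "Gstar_E = {{u, v} | u v. u \<in> {0..5} \<and> v \<in> {0..5} \<and> u \<noteq> v
                \<and> {u, v} \<noteq> {0, 1} \<and> {u, v} \<noteq> {2, 3}}
             \<union> {{6, u} | u. u \<in> {0, 1, 2, 3}}"

end

theory Submission
  imports Defs
begin

text \<open>
  Write T(v) for twice the number of triangles through v, so that the sum of all T(v) is 6 k_3(G)
  and the upper bound reads 7 \<Sum> T(v) \<le> 96 |V|. With maximum degree 5 and no K_5 one has T(v) \<le> 16,
  and T(v) = 16 forces v into a heavy block: v has a neighbour c adjacent to all of N(v), and the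
  other four neighbours of v form a 4-cycle, so that N[v] spans K_6 minus two disjoint edges.
  Discharging then brings every charge 7 T(v) down to at most 96: a heavy vertex sends 4 to each
  of its four non-heavy neighbours; a vertex with T = 14 sends 2 + 4h (h its number of heavy
  neighbours) to every neighbour sharing at most two of its neighbours, and such a neighbour
  exists and has T \<le> 10; a vertex with T \<le> 10 receives little, by an analysis of the heavy
  blocks around it. The graph G* is one heavy block plus a vertex joined to its four cycle
  vertices, and attains the bound.
\<close>

lemma card_eq_4E:
  assumes "finite S" "card S = 4"
  obtains a b c d where "distinct [a,b,c,d]" "S = {a,b,c,d}"
proof -
  obtain xs where xs: "set xs = S" "distinct xs" using finite_distinct_list[OF assms(1)] by blast
  then have "length xs = 4" using assms(2) distinct_card by fastforce
  then obtain a b c d where "xs = [a,b,c,d]"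
    by (auto simp: length_Suc_conv numeral_eq_Suc)
  then show ?thesis using that xs by auto
qed

lemma triangle_free_4_edges_le:
  fixes ab ac ad bc bd cd :: bool
  assumes "\<not>(ab \<and> ac \<and> bc)" "\<not>(ab \<and> ad \<and> bd)" "\<not>(ac \<and> ad \<and> cd)" "\<not>(bc \<and> bd \<and> cd)"
  shows "of_bool ab + of_bool ac + of_bool ad + of_bool bc + of_bool bd + of_bool cd \<le> (4::nat)"
  using assms by (cases ab; cases ac; cases ad; cases bc; cases bd; cases cd) simp_all

lemma triangle_free_4_edges_4:
  fixes ab ac ad bc bd cd :: bool
  assumes "\<not>(ab \<and> ac \<and> bc)" "\<not>(ab \<and> ad \<and> bd)" "\<not>(ac \<and> ad \<and> cd)" "\<not>(bc \<and> bd \<and> cd)"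
    and "of_bool ab + of_bool ac + of_bool ad + of_bool bc + of_bool bd + of_bool cd = (4::nat)"
  shows "(\<not>ab \<and> \<not>cd \<and> ac \<and> ad \<and> bc \<and> bd) \<or> (\<not>ac \<and> \<not>bd \<and> ab \<and> ad \<and> bc \<and> cd)
    \<or> (\<not>ad \<and> \<not>bc \<and> ab \<and> ac \<and> bd \<and> cd)"
  using assms by (cases ab; cases ac; cases ad; cases bc; cases bd; cases cd) simp_all

lemma card_ge_3_if_subset: "{p,q,r} \<subseteq> S \<Longrightarrow> finite S \<Longrightarrow> distinct [p,q,r] \<Longrightarrow> 3 \<le> card S"
  using card_mono[of S "{p,q,r}"] by simp

section \<open>Graphs of maximum degree 5 without K_5\<close>

locale graph_deg5_clique4 =
  fixes V :: "nat set" and E :: "nat set set"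
  assumes in_class: "graph_class 5 4 V E"
begin

definition adj :: "nat \<Rightarrow> nat \<Rightarrow> bool" where
  "adj u v \<longleftrightarrow> {u,v} \<in> E"

definition nbhd :: "nat \<Rightarrow> nat set" where
  "nbhd v = {u \<in> V. adj u v}"

definition arcs :: "nat set \<Rightarrow> nat" where
  "arcs S = card {(a,b). a \<in> S \<and> b \<in> S \<and> adj a b}"

text \<open>The quantity T(v): twice the number of triangles through v.\<close>

abbreviation link_arcs :: "nat \<Rightarrow> nat" where
  "link_arcs v \<equiv> arcs (nbhd v)"

lemma finite_V: "finite V"
  using in_class by (simp add: graph_class_def simple_graph_def)

lemma adj_sym: "adj u v \<longleftrightarrow> adj v u"
  by (simp add: adj_def insert_commute)

lemma adj_in_V: "adj u v \<Longrightarrow> u \<in> V \<and> v \<in> V"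
  using in_class unfolding adj_def graph_class_def simple_graph_def by blast

lemma not_adj_self: "\<not> adj u u"
proof
  assume "adj u u"
  then have "card {u} = 2" using in_class unfolding adj_def graph_class_def simple_graph_def by force
  then show False by simp
qed

lemma adj_ne: "adj u v \<Longrightarrow> u \<noteq> v"
  using not_adj_self by blast

lemma in_nbhd_iff: "u \<in> nbhd v \<longleftrightarrow> adj u v"
  using adj_in_V by (auto simp: nbhd_def)

lemma adj_if_in_nbhd: "x \<in> nbhd v \<Longrightarrow> adj v x"
  using in_nbhd_iff adj_sym by blast

lemma finite_nbhd: "finite (nbhd v)"
  using finite_V by (simp add: nbhd_def)

lemma card_nbhd_le: "card (nbhd v) \<le> 5"
proof (cases "v \<in> V")
  case True
  then show ?thesis
    using in_class unfolding graph_class_def max_degree_le_def degree_def nbhd_def adj_def by blast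
next
  case False
  then have "nbhd v = {}" using adj_in_V by (auto simp: nbhd_def)
  then show ?thesis by simp
qed

lemma no_K5:
  assumes "adj a b" "adj a c" "adj a d" "adj a e" "adj b c" "adj b d" "adj b e"
    "adj c d" "adj c e" "adj d e"
  shows False
proof -
  have "distinct [a,b,c,d,e]" using assms adj_ne by auto
  moreover have "is_clique V E {a,b,c,d,e}"
    unfolding is_clique_def using assms adj_in_V by (auto simp: adj_def insert_commute)
  then have "card {a,b,c,d,e} \<le> 4"
    using in_class unfolding graph_class_def clique_number_le_def by blast
  ultimately show False by simp
qed

lemma card_nbhd_Int_set:
  "distinct xs \<Longrightarrow> card (nbhd u \<inter> set xs) = (\<Sum>z\<leftarrow>xs. of_bool (adj u z))"
proof (induction xs)
  case (Cons x xs)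
  have "nbhd u \<inter> set (x#xs) = (if adj u x then insert x (nbhd u \<inter> set xs) else nbhd u \<inter> set xs)"
    by (auto simp: in_nbhd_iff adj_sym)
  then show ?case using Cons finite_nbhd by auto
qed simp

lemma arcs_eq_sum: "finite S \<Longrightarrow> arcs S = (\<Sum>a\<in>S. card (nbhd a \<inter> S))"
proof -
  assume "finite S"
  have "{(a,b). a \<in> S \<and> b \<in> S \<and> adj a b} = Sigma S (\<lambda>a. nbhd a \<inter> S)"
    by (auto simp: in_nbhd_iff adj_sym)
  then show ?thesis unfolding arcs_def using \<open>finite S\<close> by simp
qed

lemma arcs_list:
  "distinct xs \<Longrightarrow> arcs (set xs) = (\<Sum>a\<leftarrow>xs. \<Sum>z\<leftarrow>xs. of_bool (adj a z))"
  by (simp add: arcs_eq_sum card_nbhd_Int_set sum_list_distinct_conv_sum_set)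

lemma sum_card_nbhd_Int_swap:
  assumes "finite A" "finite X"
  shows "(\<Sum>u\<in>X. card (nbhd u \<inter> A)) = (\<Sum>a\<in>A. card (nbhd a \<inter> X))"
proof -
  have "(\<Sum>u\<in>X. card (nbhd u \<inter> A)) = card (Sigma X (\<lambda>u. nbhd u \<inter> A))" using assms by simp
  also have "\<dots> = card ((\<lambda>(a,u). (u,a)) ` Sigma A (\<lambda>a. nbhd a \<inter> X))"
    by (rule arg_cong[where f=card]) (auto simp: in_nbhd_iff adj_sym image_iff)
  also have "\<dots> = card (Sigma A (\<lambda>a. nbhd a \<inter> X))"
    by (rule card_image) (auto simp: inj_on_def)
  also have "\<dots> = (\<Sum>a\<in>A. card (nbhd a \<inter> X))" using assms by simp
  finally show ?thesis .
qed

lemma arcs_Un: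
  assumes "finite A" "finite X" "A \<inter> X = {}"
  shows "arcs (A \<union> X) = arcs A + 2 * (\<Sum>a\<in>A. card (nbhd a \<inter> X)) + arcs X"
proof -
  have split: "card (nbhd u \<inter> (A \<union> X)) = card (nbhd u \<inter> A) + card (nbhd u \<inter> X)" for u
    using assms finite_nbhd by (subst card_Un_disjoint[symmetric]) (auto simp: Int_Un_distrib)
  have "arcs (A \<union> X) = (\<Sum>u\<in>A. card (nbhd u \<inter> (A \<union> X))) + (\<Sum>u\<in>X. card (nbhd u \<inter> (A \<union> X)))"
    using assms by (simp add: arcs_eq_sum sum.union_disjoint)
  also have "\<dots> = arcs A + (\<Sum>u\<in>A. card (nbhd u \<inter> X)) + ((\<Sum>u\<in>X. card (nbhd u \<inter> A)) + arcs X)"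
    using assms by (simp add: split sum.distrib arcs_eq_sum)
  finally show ?thesis
    using sum_card_nbhd_Int_swap[OF assms(1,2)] by simp
qed

lemma arcs_le: "finite X \<Longrightarrow> arcs X \<le> card X * (card X - 1)"
proof -
  assume "finite X"
  have "card (nbhd u \<inter> X) \<le> card X - 1" if "u \<in> X" for u
  proof -
    have "nbhd u \<inter> X \<subseteq> X - {u}" using not_adj_self by (auto simp: in_nbhd_iff)
    then show ?thesis using \<open>finite X\<close> that by (metis card_Diff_singleton card_mono finite_Diff)
  qed
  then have "arcs X \<le> (\<Sum>u\<in>X. card X - 1)"
    unfolding arcs_eq_sum[OF \<open>finite X\<close>] by (rule sum_mono)
  then show ?thesis by simp
qed

lemma even_arcs: "finite S \<Longrightarrow> even (arcs S)"
proof -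
  assume "finite S"
  let ?P = "{(a,b). a \<in> S \<and> b \<in> S \<and> adj a b}"
  let ?L = "{(a,b). a \<in> S \<and> b \<in> S \<and> adj a b \<and> a < b}"
  let ?G = "{(a,b). a \<in> S \<and> b \<in> S \<and> adj a b \<and> b < a}"
  have "finite ?P" by (rule finite_subset[of _ "S \<times> S"]) (auto simp: \<open>finite S\<close>)
  then have "finite ?L" "finite ?G" by (rule finite_subset[rotated], auto)+
  moreover have "?P = ?L \<union> ?G" using adj_ne by (auto simp: linorder_neq_iff)
  ultimately have "card ?P = card ?L + card ?G" by (simp add: card_Un_disjoint disjoint_iff)
  moreover have "?G = (\<lambda>(a,b). (b,a)) ` ?L" by (auto simp: adj_sym image_iff)
  moreover have "card ((\<lambda>(a,b). (b,a)) ` ?L) = card ?L" by (rule card_image) (auto simp: inj_on_def)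
  ultimately have "card ?P = 2 * card ?L" by simp
  then show ?thesis unfolding arcs_def by simp
qed

lemma even_link_arcs: "even (link_arcs v)"
  using even_arcs finite_nbhd by blast

lemma card_common_nbhd_le: "u \<in> nbhd v \<Longrightarrow> card (nbhd u \<inter> nbhd v) \<le> card (nbhd v) - 1"
proof -
  assume u: "u \<in> nbhd v"
  have "nbhd u \<inter> nbhd v \<subseteq> nbhd v - {u}" using not_adj_self by (auto simp: in_nbhd_iff)
  then have "card (nbhd u \<inter> nbhd v) \<le> card (nbhd v - {u})" using finite_nbhd by (simp add: card_mono)
  then show ?thesis using u finite_nbhd by simp
qed

lemma link_arcs_le_12: "card (nbhd v) \<le> 4 \<Longrightarrow> link_arcs v \<le> 12"
proof -
  assume d: "card (nbhd v) \<le> 4"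
  have "link_arcs v \<le> card (nbhd v) * (card (nbhd v) - 1)" using arcs_le finite_nbhd by blast
  also have "\<dots> \<le> 4 * 3" using d by (intro mult_mono) auto
  finally show ?thesis by simp
qed

lemma card_nbhd_eq_5: "link_arcs v \<ge> 13 \<Longrightarrow> card (nbhd v) = 5"
  using link_arcs_le_12[of v] card_nbhd_le[of v] by (cases "card (nbhd v) \<le> 4") auto

lemma apex_exists:
  assumes "link_arcs w \<ge> 16"
  obtains c where "c \<in> nbhd w" "card (nbhd c \<inter> nbhd w) = 4"
proof -
  have "\<exists>c\<in>nbhd w. card (nbhd c \<inter> nbhd w) = 4"
  proof (rule ccontr)
    assume no_apex: "\<not> ?thesis"
    have d5: "card (nbhd w) = 5" using card_nbhd_eq_5 assms by simp
    have "card (nbhd u \<inter> nbhd w) \<le> 3" if "u \<in> nbhd w" for u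
      using card_common_nbhd_le[OF that] d5 no_apex that by fastforce
    then have "link_arcs w \<le> (\<Sum>u\<in>nbhd w. 3)"
      unfolding arcs_eq_sum[OF finite_nbhd] by (rule sum_mono)
    then show False using d5 assms by simp
  qed
  then show ?thesis using that by blast
qed

lemma apex_nbhd_structure:
  assumes "card (nbhd w) = 5" "c \<in> nbhd w" "card (nbhd c \<inter> nbhd w) = 4"
  obtains p1 p2 p3 p4 where "distinct [w,c,p1,p2,p3,p4]" "nbhd w = {c,p1,p2,p3,p4}"
    "adj c w" "adj c p1" "adj c p2" "adj c p3" "adj c p4"
    "link_arcs w = 8 + 2 * (of_bool (adj p1 p2) + of_bool (adj p1 p3) + of_bool (adj p1 p4)
       + of_bool (adj p2 p3) + of_bool (adj p2 p4) + of_bool (adj p3 p4))"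
    "\<not>(adj p1 p2 \<and> adj p1 p3 \<and> adj p2 p3)" "\<not>(adj p1 p2 \<and> adj p1 p4 \<and> adj p2 p4)"
    "\<not>(adj p1 p3 \<and> adj p1 p4 \<and> adj p3 p4)" "\<not>(adj p2 p3 \<and> adj p2 p4 \<and> adj p3 p4)"
proof -
  have "nbhd c \<inter> nbhd w \<subseteq> nbhd w - {c}" using not_adj_self by (auto simp: in_nbhd_iff)
  moreover have "card (nbhd w - {c}) = 4" using assms finite_nbhd by simp
  ultimately have common: "nbhd c \<inter> nbhd w = nbhd w - {c}"
    using assms(3) finite_nbhd by (metis card_subset_eq finite_Diff)
  obtain p1 p2 p3 p4 where ps: "distinct [p1,p2,p3,p4]" "nbhd w - {c} = {p1,p2,p3,p4}"
    using card_eq_4E \<open>card (nbhd w - {c}) = 4\<close> finite_nbhd by (metis finite_Diff)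
  have Nw: "nbhd w = {c,p1,p2,p3,p4}" using ps assms(2) by auto
  have wa: "adj w c" "adj w p1" "adj w p2" "adj w p3" "adj w p4"
    using Nw adj_if_in_nbhd by auto
  have ca: "adj c p1" "adj c p2" "adj c p3" "adj c p4"
    using common ps adj_if_in_nbhd by blast+
  have dist: "distinct [w,c,p1,p2,p3,p4]" using ps wa ca adj_ne by auto
  have "link_arcs w = (\<Sum>a\<leftarrow>[c,p1,p2,p3,p4]. \<Sum>z\<leftarrow>[c,p1,p2,p3,p4]. of_bool (adj a z))"
    using arcs_list[of "[c,p1,p2,p3,p4]"] Nw dist by simp
  then have count: "link_arcs w = 8 + 2 * (of_bool (adj p1 p2) + of_bool (adj p1 p3)
      + of_bool (adj p1 p4) + of_bool (adj p2 p3) + of_bool (adj p2 p4) + of_bool (adj p3 p4))"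
    using ca not_adj_self adj_sym[of p1 c] adj_sym[of p2 c] adj_sym[of p3 c] adj_sym[of p4 c]
      adj_sym[of p2 p1] adj_sym[of p3 p1] adj_sym[of p4 p1] adj_sym[of p3 p2] adj_sym[of p4 p2]
      adj_sym[of p4 p3]
    by simp
  have triangle_free: "\<not>(adj x y \<and> adj x z \<and> adj y z)"
    if "x \<in> {p1,p2,p3,p4}" "y \<in> {p1,p2,p3,p4}" "z \<in> {p1,p2,p3,p4}" for x y z
  proof
    assume "adj x y \<and> adj x z \<and> adj y z"
    moreover have "adj w x" "adj w y" "adj w z" "adj c x" "adj c y" "adj c z" using that wa ca by auto
    ultimately show False using no_K5[of w c x y z] wa by blast
  qed
  have "adj c w" using wa adj_sym by blast
  then show ?thesis by (rule that[OF dist Nw _ ca count]) (use triangle_free in auto)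
qed

section \<open>Heavy blocks\<close>

definition heavy_block :: "nat \<Rightarrow> nat \<Rightarrow> nat \<Rightarrow> nat \<Rightarrow> nat \<Rightarrow> nat \<Rightarrow> bool" where
  "heavy_block w c a a' b b' \<longleftrightarrow> distinct [w,c,a,a',b,b']
     \<and> nbhd w = {c,a,a',b,b'} \<and> nbhd c = {w,a,a',b,b'}
     \<and> adj a b \<and> adj a b' \<and> adj a' b \<and> adj a' b' \<and> \<not> adj a a' \<and> \<not> adj b b'"

lemma link_arcs_ge_16E:
  assumes "link_arcs w \<ge> 16"
  obtains c a a' b b' where "link_arcs w = 16" "heavy_block w c a a' b b'"
proof -
  obtain c where c: "c \<in> nbhd w" "card (nbhd c \<inter> nbhd w) = 4" using apex_exists assms by blast
  have d5: "card (nbhd w) = 5" using card_nbhd_eq_5 assms by simp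
  obtain p1 p2 p3 p4 where dist: "distinct [w,c,p1,p2,p3,p4]" and Nw: "nbhd w = {c,p1,p2,p3,p4}"
    and ca: "adj c w" "adj c p1" "adj c p2" "adj c p3" "adj c p4"
    and count: "link_arcs w = 8 + 2 * (of_bool (adj p1 p2) + of_bool (adj p1 p3) + of_bool (adj p1 p4)
       + of_bool (adj p2 p3) + of_bool (adj p2 p4) + of_bool (adj p3 p4))"
    and tf: "\<not>(adj p1 p2 \<and> adj p1 p3 \<and> adj p2 p3)" "\<not>(adj p1 p2 \<and> adj p1 p4 \<and> adj p2 p4)"
      "\<not>(adj p1 p3 \<and> adj p1 p4 \<and> adj p3 p4)" "\<not>(adj p2 p3 \<and> adj p2 p4 \<and> adj p3 p4)"
    using apex_nbhd_structure[OF d5 c] by blast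
  have four: "of_bool (adj p1 p2) + of_bool (adj p1 p3) + of_bool (adj p1 p4)
       + of_bool (adj p2 p3) + of_bool (adj p2 p4) + of_bool (adj p3 p4) = (4::nat)"
    using triangle_free_4_edges_le[OF tf] count assms by simp
  then have e16: "link_arcs w = 16" using count by simp
  have "{w,p1,p2,p3,p4} \<subseteq> nbhd c" using ca by (auto simp: in_nbhd_iff adj_sym)
  moreover have "card {w,p1,p2,p3,p4} = 5" using dist by simp
  ultimately have Nc: "nbhd c = {w,p1,p2,p3,p4}"
    using card_nbhd_le[of c] finite_nbhd by (metis card_seteq)
  from triangle_free_4_edges_4[OF tf four] show ?thesis
  proof (elim disjE)
    assume "\<not>adj p1 p2 \<and> \<not>adj p3 p4 \<and> adj p1 p3 \<and> adj p1 p4 \<and> adj p2 p3 \<and> adj p2 p4"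
    then have "heavy_block w c p1 p2 p3 p4" unfolding heavy_block_def using dist Nw Nc by auto
    then show ?thesis using that e16 by blast
  next
    assume "\<not>adj p1 p3 \<and> \<not>adj p2 p4 \<and> adj p1 p2 \<and> adj p1 p4 \<and> adj p2 p3 \<and> adj p3 p4"
    then have "heavy_block w c p1 p3 p2 p4"
      unfolding heavy_block_def using dist Nw Nc by (auto simp: adj_sym insert_commute)
    then show ?thesis using that e16 by blast
  next
    assume "\<not>adj p1 p4 \<and> \<not>adj p2 p3 \<and> adj p1 p2 \<and> adj p1 p3 \<and> adj p2 p4 \<and> adj p3 p4"
    then have "heavy_block w c p1 p4 p2 p3"
      unfolding heavy_block_def using dist Nw Nc by (auto simp: adj_sym insert_commute)
    then show ?thesis using that e16 by blast
  qed
qed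

lemma link_arcs_le_16: "link_arcs v \<le> 16"
  using link_arcs_ge_16E[of v] by fastforce

lemma heavy_blockE:
  assumes "link_arcs w = 16"
  obtains c a a' b b' where "heavy_block w c a a' b b'"
  by (rule link_arcs_ge_16E[of w]) (use assms in auto)

lemma heavy_block_sym:
  assumes "heavy_block w c a a' b b'"
  shows "heavy_block c w a a' b b'" "heavy_block w c a' a b b'" "heavy_block w c a a' b' b"
    "heavy_block w c b b' a a'"
  using assms unfolding heavy_block_def by (auto simp: adj_sym insert_commute)

lemma heavy_block_adj:
  assumes "heavy_block w c a a' b b'"
  shows "adj w c" "adj w a" "adj w a'" "adj w b" "adj w b'" "adj c a" "adj c a'" "adj c b" "adj c b'"
    "adj a b" "adj a b'" "adj a' b" "adj a' b'" "\<not> adj a a'" "\<not> adj b b'"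
proof -
  have "nbhd w = {c,a,a',b,b'}" "nbhd c = {w,a,a',b,b'}" using assms unfolding heavy_block_def by auto
  then show "adj w c" "adj w a" "adj w a'" "adj w b" "adj w b'" "adj c a" "adj c a'" "adj c b" "adj c b'"
    using adj_if_in_nbhd by auto
  show "adj a b" "adj a b'" "adj a' b" "adj a' b'" "\<not> adj a a'" "\<not> adj b b'"
    using assms unfolding heavy_block_def by auto
qed

lemma heavy_block_link_arcs: "heavy_block w c a a' b b' \<Longrightarrow> link_arcs w = 16"
proof -
  assume B: "heavy_block w c a a' b b'"
  have "distinct [c,a,a',b,b']" "nbhd w = set [c,a,a',b,b']" using B unfolding heavy_block_def by auto
  then show ?thesis
    using arcs_list[of "[c,a,a',b,b']"] heavy_block_adj[OF B] not_adj_self adj_sym[of a c]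
      adj_sym[of a' c] adj_sym[of b c] adj_sym[of b' c] adj_sym[of a' a] adj_sym[of b a]
      adj_sym[of b' a] adj_sym[of b a'] adj_sym[of b' a'] adj_sym[of b' b]
    by simp
qed

lemma heavy_block_link_arcs_apex: "heavy_block w c a a' b b' \<Longrightarrow> link_arcs c = 16"
  using heavy_block_link_arcs heavy_block_sym(1) by blast

lemma heavy_block_port:
  assumes "heavy_block w c a a' b b'" "u \<in> {a,a',b,b'}"
  shows "\<exists>u' q q'. heavy_block w c u u' q q'"
  using assms heavy_block_sym[OF assms(1)] heavy_block_sym(2)[OF heavy_block_sym(4)[OF assms(1)]]
  by blast

text \<open>The vertices a, a', b, b' of a heavy block are called its ports.\<close>

lemma port_outer_nbrE:
  assumes B: "heavy_block w c a a' b b'"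
  obtains y where "nbhd a \<subseteq> {w,c,b,b',y}" "y \<notin> {w,c,a,a',b,b'}"
proof -
  note A = heavy_block_adj[OF B]
  have "distinct [w,c,a,a',b,b']" using B unfolding heavy_block_def by simp
  then have "card {w,c,b,b'} = 4" by simp
  moreover have inner: "{w,c,b,b'} \<subseteq> nbhd a" using A by (auto simp: in_nbhd_iff adj_sym)
  ultimately have "card (nbhd a - {w,c,b,b'}) \<le> 1"
    using card_nbhd_le[of a] finite_nbhd by (simp add: card_Diff_subset)
  moreover have outer: "(nbhd a - {w,c,b,b'}) \<inter> {w,c,a,a',b,b'} = {}"
    using not_adj_self A(14) by (auto simp: in_nbhd_iff adj_sym)
  ultimately obtain y where "nbhd a - {w,c,b,b'} \<subseteq> {y}" "y \<notin> {w,c,a,a',b,b'}"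
  proof (cases "nbhd a - {w,c,b,b'} = {}")
    case True
    then show ?thesis using that ex_new_if_finite[of "{w,c,a,a',b,b'}"] by auto
  next
    case False
    with \<open>card (nbhd a - {w,c,b,b'}) \<le> 1\<close> obtain y where "nbhd a - {w,c,b,b'} = {y}"
      using finite_nbhd by (metis card_0_eq card_1_singletonE finite_Diff le_SucE le_zero_eq One_nat_def)
    then show ?thesis using that outer by auto
  qed
  then show ?thesis using that by blast
qed

lemma port_link_arcs:
  assumes B: "heavy_block w c a a' b b'"
    and Na: "nbhd a \<subseteq> {w,c,b,b',y}" and y: "y \<notin> {w,c,a,a',b,b'}"
  shows "link_arcs a = (if adj a y then 10 + 2 * (of_bool (adj y b) + of_bool (adj y b')) else 10)"
proof -
  note A = heavy_block_adj[OF B]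
  have dist: "distinct [w,c,a,a',b,b']" and Nw: "nbhd w = {c,a,a',b,b'}" and Nc: "nbhd c = {w,a,a',b,b'}"
    using B unfolding heavy_block_def by auto
  have yw: "\<not> adj y w" and yc: "\<not> adj y c" using y Nw Nc in_nbhd_iff by auto
  have inner: "{w,c,b,b'} \<subseteq> nbhd a" using A by (auto simp: in_nbhd_iff adj_sym)
  show ?thesis
  proof (cases "adj a y")
    case True
    then have "nbhd a = set [w,c,b,b',y]" using Na inner by (auto simp: in_nbhd_iff adj_sym)
    moreover have "distinct [w,c,b,b',y]" using dist y by auto
    ultimately show ?thesis
      using arcs_list[of "[w,c,b,b',y]"] True A yw yc not_adj_self adj_sym[of c w] adj_sym[of b w]
        adj_sym[of b' w] adj_sym[of y w] adj_sym[of b c] adj_sym[of b' c] adj_sym[of y c]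
        adj_sym[of b' b] adj_sym[of y b] adj_sym[of y b']
      by simp
  next
    case False
    then have "nbhd a = set [w,c,b,b']" using Na inner by (auto simp: in_nbhd_iff adj_sym)
    moreover have "distinct [w,c,b,b']" using dist by auto
    ultimately show ?thesis
      using arcs_list[of "[w,c,b,b']"] False A not_adj_self adj_sym[of c w] adj_sym[of b w]
        adj_sym[of b' w] adj_sym[of b c] adj_sym[of b' c] adj_sym[of b' b]
      by simp
  qed
qed

lemma portE:
  assumes B: "heavy_block w c a a' b b'"
  obtains y where "nbhd a \<subseteq> {w,c,b,b',y}" "y \<notin> {w,c,a,a',b,b'}" "\<not> adj y w" "\<not> adj y c"
    "link_arcs a = (if adj a y then 10 + 2 * (of_bool (adj y b) + of_bool (adj y b')) else 10)"
proof -
  obtain y where y: "nbhd a \<subseteq> {w,c,b,b',y}" "y \<notin> {w,c,a,a',b,b'}" by (rule port_outer_nbrE[OF B])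
  moreover have "\<not> adj y w" "\<not> adj y c"
    using y(2) B unfolding heavy_block_def by (auto simp: in_nbhd_iff[symmetric])
  ultimately show ?thesis using that port_link_arcs[OF B y] by blast
qed

lemma ports_link_arcs_le_14:
  assumes "heavy_block w c a a' b b'"
  shows "link_arcs a \<le> 14" "link_arcs a' \<le> 14" "link_arcs b \<le> 14" "link_arcs b' \<le> 14"
proof -
  have port: "link_arcs p \<le> 14" if "heavy_block w c p p' q q'" for p p' q q'
    by (rule portE[OF that]) auto
  show "link_arcs a \<le> 14" "link_arcs a' \<le> 14" "link_arcs b \<le> 14" "link_arcs b' \<le> 14"
    using port assms heavy_block_sym(2,4)[OF assms] heavy_block_sym(2)[OF heavy_block_sym(4)[OF assms]]
    by blast+
qed

lemma sparse_nbr_exists: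
  assumes "link_arcs v = 14"
  obtains x where "x \<in> nbhd v" "card (nbhd x \<inter> nbhd v) \<le> 2"
proof -
  have "\<exists>x\<in>nbhd v. card (nbhd x \<inter> nbhd v) \<le> 2"
  proof (rule ccontr)
    assume "\<not> ?thesis"
    then have "(\<Sum>x\<in>nbhd v. 3) \<le> link_arcs v"
      unfolding arcs_eq_sum[OF finite_nbhd] by (intro sum_mono) auto
    then show False using card_nbhd_eq_5 assms by simp
  qed
  then show ?thesis using that by blast
qed

lemma card_nbhd_Int_add_le_4:
  assumes "u \<in> nbhd v" "X \<inter> nbhd v = {}" "v \<notin> X"
  shows "card (nbhd u \<inter> X) + card (nbhd u \<inter> nbhd v) \<le> 4"
proof -
  have "v \<in> nbhd u" using assms(1) by (simp add: in_nbhd_iff adj_sym)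
  have "insert v ((nbhd u \<inter> nbhd v) \<union> (nbhd u \<inter> X)) \<subseteq> nbhd u" using \<open>v \<in> nbhd u\<close> by auto
  then have "card (insert v ((nbhd u \<inter> nbhd v) \<union> (nbhd u \<inter> X))) \<le> 5" using card_nbhd_le[of u] finite_nbhd
    by (meson card_mono le_trans)
  moreover have "v \<notin> (nbhd u \<inter> nbhd v) \<union> (nbhd u \<inter> X)" using assms(3) not_adj_self by (auto simp: in_nbhd_iff)
  moreover have "card ((nbhd u \<inter> nbhd v) \<union> (nbhd u \<inter> X)) = card (nbhd u \<inter> nbhd v) + card (nbhd u \<inter> X)"
    by (rule card_Un_disjoint) (use assms(2) finite_nbhd in auto)
  ultimately show ?thesis using finite_nbhd by simp
qed

lemma sparse_nbr_shape:
  assumes ev: "link_arcs v = 14" and xv: "x \<in> nbhd v" and sparse: "card (nbhd x \<inter> nbhd v) \<le> 2"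
  obtains p q r s where "nbhd v = {x,p,q,r,s}" "distinct [x,p,q,r,s]"
    "adj x p" "adj x q" "\<not> adj x r" "\<not> adj x s"
    "of_bool (adj p q) + of_bool (adj p r) + of_bool (adj p s) + of_bool (adj q r)
       + of_bool (adj q s) + of_bool (adj r s) = (5::nat)"
proof -
  let ?T = "nbhd v - {x}"
  have cT: "card ?T = 4" using card_nbhd_eq_5 ev xv finite_nbhd by simp
  have IT: "nbhd x \<inter> nbhd v \<subseteq> ?T" using not_adj_self by (auto simp: in_nbhd_iff)
  then have "card (?T - (nbhd x \<inter> nbhd v)) \<ge> 2"
    using cT sparse finite_nbhd by (simp add: card_Diff_subset)
  then obtain r s where rs: "r \<in> ?T - (nbhd x \<inter> nbhd v)" "s \<in> ?T - (nbhd x \<inter> nbhd v)" "r \<noteq> s"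
    by (metis card_le_Suc0_iff_eq not_less_eq_eq numeral_2_eq_2 finite_Diff finite_nbhd)
  have "card (?T - {r,s}) = 2" using cT rs finite_nbhd by (simp add: card_Diff_subset)
  then obtain p q where pq: "?T - {r,s} = {p,q}" "p \<noteq> q" by (meson card_2_iff)
  have Nv: "nbhd v = {x,p,q,r,s}" using pq rs xv by auto
  have dist: "distinct [x,p,q,r,s]" using pq rs by auto
  have xr: "\<not> adj x r" "\<not> adj x s" using rs by (auto simp: in_nbhd_iff adj_sym)
  have "link_arcs v = (\<Sum>a\<leftarrow>[x,p,q,r,s]. \<Sum>z\<leftarrow>[x,p,q,r,s]. of_bool (adj a z))"
    using arcs_list[of "[x,p,q,r,s]"] Nv dist by simp
  then have seven: "of_bool (adj x p) + of_bool (adj x q) + of_bool (adj p q) + of_bool (adj p r)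
      + of_bool (adj p s) + of_bool (adj q r) + of_bool (adj q s) + of_bool (adj r s) = (7::nat)"
    using ev xr not_adj_self adj_sym[of p x] adj_sym[of q x] adj_sym[of r x] adj_sym[of s x]
      adj_sym[of q p] adj_sym[of r p] adj_sym[of s p] adj_sym[of r q] adj_sym[of s q] adj_sym[of s r]
    by simp
  have "\<not>(adj p q \<and> adj p r \<and> adj p s \<and> adj q r \<and> adj q s \<and> adj r s)"
    using no_K5[of v p q r s] Nv adj_if_in_nbhd by auto
  then have "adj x p \<and> adj x q"
    using seven by (cases "adj x p"; cases "adj x q") (auto simp: of_bool_def split: if_splits)
  then show ?thesis using that Nv dist xr seven by simp
qed

lemma sparse_nbr_light:
  assumes ev: "link_arcs v = 14" and xv: "x \<in> nbhd v" and sparse: "card (nbhd x \<inter> nbhd v) \<le> 2"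
  shows "link_arcs x \<le> 10"
proof -
  obtain p q r s where Nv: "nbhd v = {x,p,q,r,s}" and dist: "distinct [x,p,q,r,s]"
    and xp: "adj x p" and xq: "adj x q" and xr: "\<not> adj x r" "\<not> adj x s"
    and five: "of_bool (adj p q) + of_bool (adj p r) + of_bool (adj p s) + of_bool (adj q r)
       + of_bool (adj q s) + of_bool (adj r s) = (5::nat)"
    by (rule sparse_nbr_shape[OF assms])
  let ?X = "nbhd x - {v,p,q}"
  have vpq: "adj v p" "adj v q" "adj v x" using Nv adj_if_in_nbhd by auto
  have Nx: "nbhd x = {v,p,q} \<union> ?X" using vpq xp xq by (auto simp: in_nbhd_iff adj_sym)
  have disj: "?X \<inter> nbhd v = {}" using Nv xr not_adj_self by (auto simp: in_nbhd_iff adj_sym)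
  have dvpq: "distinct [v,p,q]" using dist vpq adj_ne by auto
  have "card ({v,p,q} \<union> ?X) = card {v,p,q} + card ?X"
    by (rule card_Un_disjoint) (use finite_nbhd in auto)
  with Nx dvpq card_nbhd_le[of x] have "card ?X \<le> 2" by simp
  have "arcs ?X \<le> card ?X * (card ?X - 1)" by (rule arcs_le) (simp add: finite_nbhd)
  also have "\<dots> \<le> 2 * 1" using \<open>card ?X \<le> 2\<close> by (intro mult_mono) auto
  finally have "arcs ?X \<le> 2" by simp
  have "link_arcs x = arcs {v,p,q} + 2 * (\<Sum>a\<in>{v,p,q}. card (nbhd a \<inter> ?X)) + arcs ?X"
    using arcs_Un[of "{v,p,q}" ?X] Nx finite_nbhd by simp
  also have "arcs {v,p,q} = 4 + 2 * of_bool (adj p q)"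
    using arcs_list[of "[v,p,q]"] dvpq vpq not_adj_self adj_sym[of p v] adj_sym[of q v] adj_sym[of q p]
    by simp
  also have "(\<Sum>a\<in>{v,p,q}. card (nbhd a \<inter> ?X)) = card (nbhd p \<inter> ?X) + card (nbhd q \<inter> ?X)"
    using dvpq disj by (simp add: Int_commute)
  finally have "link_arcs x \<le> 6 + 2 * of_bool (adj p q) + 2 * (card (nbhd p \<inter> ?X) + card (nbhd q \<inter> ?X))"
    using \<open>arcs ?X \<le> 2\<close> by linarith
  moreover have "card (nbhd u \<inter> ?X) + card (nbhd u \<inter> nbhd v) \<le> 4" if "u \<in> {p,q}" for u
    using that Nv by (intro card_nbhd_Int_add_le_4[OF _ disj]) auto
  then have "card (nbhd p \<inter> ?X) + card (nbhd p \<inter> nbhd v) \<le> 4"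
    "card (nbhd q \<inter> ?X) + card (nbhd q \<inter> nbhd v) \<le> 4" by auto
  moreover have "card (nbhd p \<inter> nbhd v) = 1 + of_bool (adj p q) + of_bool (adj p r) + of_bool (adj p s)"
    using card_nbhd_Int_set[of "[x,p,q,r,s]" p] Nv dist xp not_adj_self adj_sym[of p x] by simp
  moreover have "card (nbhd q \<inter> nbhd v) = 1 + of_bool (adj p q) + of_bool (adj q r) + of_bool (adj q s)"
    using card_nbhd_Int_set[of "[x,p,q,r,s]" q] Nv dist xq not_adj_self adj_sym[of q x] adj_sym[of q p]
    by simp
  moreover have "of_bool (adj r s) \<le> (1::nat)" by simp
  ultimately show ?thesis using five unfolding distrib_left by linarith
qed

definition heavy_nbrs :: "nat \<Rightarrow> nat" where
  "heavy_nbrs u = card {z \<in> nbhd u. link_arcs z = 16}"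

lemma port_nbhd:
  assumes B: "heavy_block w c a a' b b'" and ax: "adj a x" and xn: "x \<notin> {w,c,b,b'}"
  shows "nbhd a \<subseteq> {w,c,b,b',x}" "x \<notin> {w,c,a,a',b,b'}" "\<not> adj x w" "\<not> adj x c"
    "link_arcs a = 10 + 2 * (of_bool (adj x b) + of_bool (adj x b'))"
proof -
  obtain y where y: "nbhd a \<subseteq> {w,c,b,b',y}" "y \<notin> {w,c,a,a',b,b'}" "\<not> adj y w" "\<not> adj y c"
    "link_arcs a = (if adj a y then 10 + 2 * (of_bool (adj y b) + of_bool (adj y b')) else 10)"
    by (rule portE[OF B])
  have "x \<in> nbhd a" using ax by (simp add: in_nbhd_iff adj_sym)
  then have "x = y" using y(1) xn by auto
  then show "nbhd a \<subseteq> {w,c,b,b',x}" "x \<notin> {w,c,a,a',b,b'}" "\<not> adj x w" "\<not> adj x c"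
    "link_arcs a = 10 + 2 * (of_bool (adj x b) + of_bool (adj x b'))"
    using y ax by auto
qed

text \<open>Every neighbour of a port inside its block shares three of the port's neighbours.\<close>

lemma sparse_nbr_of_port:
  assumes B: "heavy_block w c a a' b b'" and ea: "link_arcs a = 14"
    and xa: "x \<in> nbhd a" and sparse: "card (nbhd x \<inter> nbhd a) \<le> 2"
  shows "x \<notin> {w,c,a,a',b,b'}" "adj x b" "adj x b'" "nbhd a = {w,c,b,b',x}" "\<not> adj x w" "\<not> adj x c"
proof -
  note A = heavy_block_adj[OF B]
  have dist: "distinct [w,c,a,a',b,b']" using B unfolding heavy_block_def by auto
  obtain y where y: "nbhd a \<subseteq> {w,c,b,b',y}" "y \<notin> {w,c,a,a',b,b'}" "\<not> adj y w" "\<not> adj y c"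
    "link_arcs a = (if adj a y then 10 + 2 * (of_bool (adj y b) + of_bool (adj y b')) else 10)"
    by (rule portE[OF B])
  have ay: "adj a y" "adj y b" "adj y b'" using y(5) ea by (auto simp: of_bool_def split: if_splits)
  have Na: "nbhd a = {w,c,b,b',y}" using y(1) A ay by (auto simp: in_nbhd_iff adj_sym)
  have sub: "{c,b,b'} \<subseteq> nbhd w \<inter> nbhd a" "{w,b,b'} \<subseteq> nbhd c \<inter> nbhd a"
    "{w,c,y} \<subseteq> nbhd b \<inter> nbhd a" "{w,c,y} \<subseteq> nbhd b' \<inter> nbhd a"
    using A ay Na by (auto simp: in_nbhd_iff adj_sym)
  have d: "distinct [c,b,b']" "distinct [w,b,b']" "distinct [w,c,y]" using dist y(2) by auto
  have "3 \<le> card (nbhd w \<inter> nbhd a)" "3 \<le> card (nbhd c \<inter> nbhd a)"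
    "3 \<le> card (nbhd b \<inter> nbhd a)" "3 \<le> card (nbhd b' \<inter> nbhd a)"
    using card_ge_3_if_subset[OF sub(1) _ d(1)] card_ge_3_if_subset[OF sub(2) _ d(2)]
      card_ge_3_if_subset[OF sub(3) _ d(3)] card_ge_3_if_subset[OF sub(4) _ d(3)]
    by (simp_all add: finite_nbhd)
  then have "x = y" using xa Na sparse by fastforce
  then show "x \<notin> {w,c,a,a',b,b'}" "adj x b" "adj x b'" "nbhd a = {w,c,b,b',x}" "\<not> adj x w" "\<not> adj x c"
    using y ay Na by auto
qed

lemma heavy_nbrs_le_3: "heavy_nbrs u \<le> 3"
proof (cases "\<exists>z\<in>nbhd u. link_arcs z = 16")
  case False
  then have "{z \<in> nbhd u. link_arcs z = 16} = {}" by blast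
  then have "heavy_nbrs u = 0" unfolding heavy_nbrs_def by (metis card.empty)
  then show ?thesis by simp
next
  case True
  then obtain z where z: "z \<in> nbhd u" "link_arcs z = 16" by blast
  obtain c a a' b b' where B: "heavy_block z c a a' b b'" using heavy_blockE[OF z(2)] by blast
  have "u \<in> nbhd z" using z(1) by (simp add: in_nbhd_iff adj_sym)
  then have "u = c \<or> u \<in> {a,a',b,b'}" using B unfolding heavy_block_def by auto
  then obtain S where S: "{x \<in> nbhd u. link_arcs x = 16} \<subseteq> S" "finite S" "card S \<le> 3"
  proof
    assume "u = c"
    then have "nbhd u = {z,a,a',b,b'}" using B unfolding heavy_block_def by auto
    then have "{x \<in> nbhd u. link_arcs x = 16} \<subseteq> {z}" using ports_link_arcs_le_14[OF B] by auto
    then show ?thesis by (rule that) simp_all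
  next
    assume "u \<in> {a,a',b,b'}"
    then obtain u' q q' where B': "heavy_block z c u u' q q'" using heavy_block_port[OF B] by blast
    obtain y where "nbhd u \<subseteq> {z,c,q,q',y}" by (rule portE[OF B'])
    then have "{x \<in> nbhd u. link_arcs x = 16} \<subseteq> {z,c,y}" using ports_link_arcs_le_14[OF B'] by auto
    then show ?thesis by (rule that) (simp_all add: card_insert_le_m1)
  qed
  then show ?thesis unfolding heavy_nbrs_def using card_mono[OF S(2,1)] by simp
qed

lemma port_heavy_nbrs_le_2:
  assumes B: "heavy_block w c p p' r r'" and px: "adj p x" and xn: "x \<notin> {w,c,r,r'}"
    and ex: "link_arcs x \<noteq> 16"
  shows "heavy_nbrs p \<le> 2"
proof -
  have "nbhd p \<subseteq> {w,c,r,r',x}" using port_nbhd[OF B px xn] by blast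
  then have "{z \<in> nbhd p. link_arcs z = 16} \<subseteq> {w,c}" using ports_link_arcs_le_14[OF B] ex by auto
  then have "heavy_nbrs p \<le> card {w,c}" unfolding heavy_nbrs_def by (simp add: card_mono)
  also have "\<dots> \<le> 2" by (simp add: card_insert_le_m1)
  finally show ?thesis .
qed

lemma link_arcs_le_12_if_isolated_nbr:
  assumes xz: "x \<in> nbhd z" and dis: "nbhd x \<inter> nbhd z = {}"
  shows "link_arcs z \<le> 12"
proof -
  have "link_arcs z = card (nbhd x \<inter> nbhd z) + (\<Sum>u\<in>nbhd z - {x}. card (nbhd u \<inter> nbhd z))"
    using xz finite_nbhd by (simp add: arcs_eq_sum sum.remove)
  also have "\<dots> \<le> 0 + (\<Sum>u\<in>nbhd z - {x}. 3)"
  proof (intro add_mono sum_mono)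
    show "card (nbhd x \<inter> nbhd z) \<le> 0" using dis by simp
    fix u assume u: "u \<in> nbhd z - {x}"
    then have "nbhd u \<inter> nbhd z \<subseteq> nbhd z - {u,x}"
      using dis not_adj_self by (auto simp: in_nbhd_iff adj_sym disjoint_iff)
    then have "card (nbhd u \<inter> nbhd z) \<le> card (nbhd z - {u,x})" using finite_nbhd by (simp add: card_mono)
    also have "\<dots> = card (nbhd z) - 2" using u xz finite_nbhd by (simp add: card_Diff_subset)
    finally show "card (nbhd u \<inter> nbhd z) \<le> 3" using card_nbhd_le[of z] by simp
  qed
  also have "\<dots> = 3 * (card (nbhd z) - 1)" using xz finite_nbhd by simp
  also have "\<dots> \<le> 12" using card_nbhd_le[of z] by simp
  finally show ?thesis .
qed

section \<open>Discharging\<close>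

text \<open>
  Every vertex v starts with charge 7 T(v) and y passes charge y x to x; the aim is that
  every vertex ends with at most 96.
\<close>

definition charge :: "nat \<Rightarrow> nat \<Rightarrow> nat" where
  "charge y x = (if adj y x \<and> link_arcs y = 16 \<and> link_arcs x \<noteq> 16 then 4 else 0)
     + (if adj y x \<and> link_arcs y = 14 \<and> card (nbhd x \<inter> nbhd y) \<le> 2 then 2 + 4 * heavy_nbrs y else 0)"

lemma charge_nonadj: "\<not> adj y x \<Longrightarrow> charge y x = 0"
  by (simp add: charge_def)

lemma charge_from_heavy: "link_arcs y = 16 \<Longrightarrow> charge y x \<le> 4"
  by (simp add: charge_def)

lemma charge_le_14: "charge y x \<le> 14"
  using heavy_nbrs_le_3[of y] by (simp add: charge_def)

lemma charge_from_nonheavy: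
  "link_arcs y \<noteq> 16 \<Longrightarrow> charge y x =
    (if adj y x \<and> link_arcs y = 14 \<and> card (nbhd x \<inter> nbhd y) \<le> 2 then 2 + 4 * heavy_nbrs y else 0)"
  by (simp add: charge_def)

lemma charge_eq_0_unless_14_16: "link_arcs y \<noteq> 16 \<Longrightarrow> link_arcs y \<noteq> 14 \<Longrightarrow> charge y x = 0"
  by (simp add: charge_def)

definition received :: "nat \<Rightarrow> nat" where
  "received x = (\<Sum>z\<in>nbhd x. charge z x)"

definition sent :: "nat \<Rightarrow> nat" where
  "sent x = (\<Sum>z\<in>nbhd x. charge x z)"

lemma charge_between_ports:
  assumes B: "heavy_block w c a a' b b'"
  shows "charge b a = 0"
proof -
  have B': "heavy_block w c b b' a a'" using heavy_block_sym(4)[OF B] .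
  have "\<not> (adj b a \<and> link_arcs b = 14 \<and> card (nbhd a \<inter> nbhd b) \<le> 2)"
  proof
    assume "adj b a \<and> link_arcs b = 14 \<and> card (nbhd a \<inter> nbhd b) \<le> 2"
    moreover from this have "a \<in> nbhd b" by (simp add: in_nbhd_iff adj_sym)
    ultimately show False using sparse_nbr_of_port(1)[OF B'] by auto
  qed
  moreover have "link_arcs b \<noteq> 16" using ports_link_arcs_le_14[OF B] by simp
  ultimately show ?thesis by (simp add: charge_def)
qed

lemma heavy_nbr_portE:
  assumes "link_arcs y \<noteq> 16" "w \<in> nbhd y" "link_arcs w = 16"
  obtains c y' q q' where "heavy_block w c y y' q q'"
proof -
  obtain c a a' b b' where B: "heavy_block w c a a' b b'" using heavy_blockE[OF assms(3)] by blast
  have "y \<in> nbhd w" using assms(2) by (simp add: in_nbhd_iff adj_sym)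
  then have "y \<in> {c,a,a',b,b'}" using B unfolding heavy_block_def by auto
  moreover have "y \<noteq> c" using heavy_block_link_arcs_apex[OF B] assms(1) by auto
  ultimately have "y \<in> {a,a',b,b'}" by simp
  then show ?thesis using heavy_block_port[OF B] that by blast
qed

lemma received_le_22_if_heavy_nbr:
  assumes ex: "link_arcs x \<le> 10" and wx: "w \<in> nbhd x" and ew: "link_arcs w = 16"
  shows "received x \<le> 22"
proof -
  obtain c x' q q' where B: "heavy_block w c x x' q q'" using heavy_nbr_portE[OF _ wx ew] ex by fastforce
  obtain y where y: "nbhd x \<subseteq> {w,c,q,q',y}" "y \<notin> {w,c,x,x',q,q'}" by (rule port_outer_nbrE[OF B])
  have dist: "distinct [w,c,q,q',y]" using B y(2) unfolding heavy_block_def by auto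
  have "received x \<le> (\<Sum>z\<in>{w,c,q,q',y}. charge z x)"
    unfolding received_def by (rule sum_mono2) (use y in auto)
  also have "\<dots> = charge w x + charge c x + charge q x + charge q' x + charge y x"
    using dist by simp
  also have "\<dots> \<le> 4 + 4 + 0 + 0 + 14"
    using charge_from_heavy[OF ew] charge_from_heavy[OF heavy_block_link_arcs_apex[OF B]]
      charge_between_ports[OF B] charge_between_ports[OF heavy_block_sym(3)[OF B]] charge_le_14
    by (intro add_mono) auto
  finally show ?thesis by simp
qed

text \<open>
  A vertex with T = 14 sends more than 2 only if it has a heavy neighbour, i.e. is a port.
\<close>

lemma generous_nbr_blockE:
  assumes "link_arcs y = 14" "heavy_nbrs y \<noteq> 0" "x \<in> nbhd y" "card (nbhd x \<inter> nbhd y) \<le> 2"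
  obtains w c y' q q' where "heavy_block w c y y' q q'" "x \<notin> {w,c,y,y',q,q'}"
    "adj x q" "adj x q'" "nbhd y = {w,c,q,q',x}" "\<not> adj x w" "\<not> adj x c"
proof -
  have "{u \<in> nbhd y. link_arcs u = 16} \<noteq> {}" using assms(2) unfolding heavy_nbrs_def by (metis card.empty)
  then obtain w where w: "w \<in> nbhd y" "link_arcs w = 16" by blast
  have "link_arcs y \<noteq> 16" using assms(1) by simp
  then obtain c y' q q' where B: "heavy_block w c y y' q q'" using heavy_nbr_portE[OF _ w] by blast
  show ?thesis by (rule that[OF B]) (use sparse_nbr_of_port[OF B assms(1,3,4)] in auto)
qed

lemma outer_nbr_of_ports:
  assumes B: "heavy_block w c y y' q q'" and xo: "x \<notin> {w,c,y,y',q,q'}"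
    and xp: "adj x y" "adj x q" "adj x q'"
  shows "nbhd y \<subseteq> {w,c,q,q',x}" "nbhd q \<subseteq> {w,c,y,y',x}" "nbhd q' \<subseteq> {w,c,y,y',x}"
    "\<not> adj x w" "\<not> adj x c"
proof -
  have "adj y x" "adj q x" "adj q' x" using xp by (simp_all add: adj_sym)
  moreover have "x \<notin> {w,c,q,q'}" "x \<notin> {w,c,y,y'}" using xo by auto
  ultimately show "nbhd y \<subseteq> {w,c,q,q',x}" "nbhd q \<subseteq> {w,c,y,y',x}" "nbhd q' \<subseteq> {w,c,y,y',x}"
    "\<not> adj x w" "\<not> adj x c"
    using port_nbhd(1,3,4)[OF B] port_nbhd(1)[OF heavy_block_sym(4)[OF B]]
      port_nbhd(1)[OF heavy_block_sym(2)[OF heavy_block_sym(4)[OF B]]]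
    by simp_all
qed

lemma adj_all_portsE:
  assumes B: "heavy_block w c y y' q q'" and xo: "x \<notin> {w,c,y,y',q,q'}"
    and xp: "adj x y" "adj x y'" "adj x q" "adj x q'"
  obtains R where "nbhd x = {y,y',q,q'} \<union> R" "{y,y',q,q'} \<inter> R = {}" "card R \<le> 1"
    "\<And>p z. p \<in> {y,y',q,q'} \<Longrightarrow> z \<in> R \<Longrightarrow> \<not> adj p z"
proof -
  note outer = outer_nbr_of_ports[OF B xo xp(1,3,4)]
    outer_nbr_of_ports[OF heavy_block_sym(2)[OF B] _ xp(2,3,4)]
  then have port_nbhd_x: "nbhd p \<subseteq> {w,c,y,y',q,q',x}" if "p \<in> {y,y',q,q'}" for p
    using that xo by auto
  have xwc: "\<not> adj x w" "\<not> adj x c" using outer by simp_all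
  let ?R = "nbhd x - {y,y',q,q'}"
  have ports: "{y,y',q,q'} \<subseteq> nbhd x" using xp by (auto simp: in_nbhd_iff adj_sym)
  show ?thesis
  proof (rule that[of ?R])
    show "nbhd x = {y,y',q,q'} \<union> ?R" using ports by blast
    have "card {y,y',q,q'} = 4" using B unfolding heavy_block_def by simp
    then show "card ?R \<le> 1" using ports card_nbhd_le[of x] finite_nbhd by (simp add: card_Diff_subset)
    show "\<not> adj p z" if "p \<in> {y,y',q,q'}" "z \<in> ?R" for p z
    proof
      assume "adj p z"
      then have "z \<in> {w,c,y,y',q,q',x}" using port_nbhd_x[OF that(1)] by (auto simp: in_nbhd_iff adj_sym)
      then show False using that(2) xwc not_adj_self by (auto simp: in_nbhd_iff adj_sym)
    qed
  qed blast
qed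

lemma link_arcs_eq_8_if_adj_all_ports:
  assumes B: "heavy_block w c y y' q q'" and "x \<notin> {w,c,y,y',q,q'}"
    and "adj x y" "adj x y'" "adj x q" "adj x q'"
  shows "link_arcs x = 8"
proof -
  obtain R where Nx: "nbhd x = {y,y',q,q'} \<union> R" and disj: "{y,y',q,q'} \<inter> R = {}"
    and "card R \<le> 1" and no_edge: "\<And>p z. p \<in> {y,y',q,q'} \<Longrightarrow> z \<in> R \<Longrightarrow> \<not> adj p z"
    using adj_all_portsE[OF assms] by blast
  have fin: "finite R" using Nx finite_nbhd by (metis finite_Un)
  have "arcs R \<le> card R * (card R - 1)" by (rule arcs_le[OF fin])
  then have "arcs R = 0" using \<open>card R \<le> 1\<close> by (simp add: le_Suc_eq)
  moreover have "nbhd p \<inter> R = {}" if "p \<in> {y,y',q,q'}" for p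
    using no_edge[OF that] by (auto simp: in_nbhd_iff adj_sym)
  moreover have "distinct [y,y',q,q']" using B unfolding heavy_block_def by simp
  then have "arcs {y,y',q,q'} = 8"
    using arcs_list[of "[y,y',q,q']"] heavy_block_adj[OF B] not_adj_self adj_sym[of y' y] adj_sym[of q y]
      adj_sym[of q' y] adj_sym[of q y'] adj_sym[of q' y'] adj_sym[of q' q]
    by simp
  ultimately show ?thesis using arcs_Un[of "{y,y',q,q'}" R] Nx disj fin by simp
qed

lemma received_le_40_if_adj_all_ports:
  assumes B: "heavy_block w c y y' q q'" and xo: "x \<notin> {w,c,y,y',q,q'}"
    and xp: "adj x y" "adj x y'" "adj x q" "adj x q'"
  shows "received x \<le> 40"
proof -
  obtain R where Nx: "nbhd x = {y,y',q,q'} \<union> R" and disj: "{y,y',q,q'} \<inter> R = {}"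
    and "card R \<le> 1" and no_edge: "\<And>p z. p \<in> {y,y',q,q'} \<Longrightarrow> z \<in> R \<Longrightarrow> \<not> adj p z"
    using adj_all_portsE[OF assms] by blast
  have fin: "finite R" using Nx finite_nbhd by (metis finite_Un)
  have ex: "link_arcs x \<noteq> 16" using link_arcs_eq_8_if_adj_all_ports[OF assms] by simp
  have from_port: "charge p x \<le> 10" if "p \<in> {y,y',q,q'}" for p
  proof -
    have "heavy_nbrs p \<le> 2"
      using that port_heavy_nbrs_le_2[OF B, of x] port_heavy_nbrs_le_2[OF heavy_block_sym(2)[OF B], of x]
        port_heavy_nbrs_le_2[OF heavy_block_sym(4)[OF B], of x]
        port_heavy_nbrs_le_2[OF heavy_block_sym(2)[OF heavy_block_sym(4)[OF B]], of x] xo xp ex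
      by (auto simp: adj_sym)
    moreover have "link_arcs p \<noteq> 16" using ports_link_arcs_le_14[OF B] that by auto
    ultimately show ?thesis using charge_from_nonheavy[of p x] by simp
  qed
  have from_outside: "charge z x = 0" if "z \<in> R" for z
  proof -
    have single: "u = z" if "u \<in> R" for u
      using card_le_Suc0_iff_eq[OF fin] \<open>card R \<le> 1\<close> that \<open>z \<in> R\<close> by (metis One_nat_def)
    have "u = z" if "u \<in> nbhd x" "u \<in> nbhd z" for u
    proof -
      have "u \<notin> {y,y',q,q'}" using no_edge[OF _ \<open>z \<in> R\<close>] that(2) by (auto simp: in_nbhd_iff)
      then show ?thesis using that(1) Nx single by blast
    qed
    then have "nbhd x \<inter> nbhd z = {}" using not_adj_self in_nbhd_iff by blast
    moreover have "x \<in> nbhd z" using that Nx by (auto simp: in_nbhd_iff adj_sym)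
    ultimately show ?thesis using link_arcs_le_12_if_isolated_nbr charge_eq_0_unless_14_16 by fastforce
  qed
  have "received x = (\<Sum>z\<in>{y,y',q,q'}. charge z x) + (\<Sum>z\<in>R. charge z x)"
    unfolding received_def Nx by (rule sum.union_disjoint) (use disj fin in auto)
  also have "\<dots> \<le> (\<Sum>z\<in>{y,y',q,q'}. 10) + 0"
    using from_port from_outside by (intro add_mono sum_mono) auto
  also have "\<dots> \<le> 40" by (simp add: card_insert_le_m1)
  finally show ?thesis .
qed

lemma charge_le_2_if_adj_three_ports:
  assumes B: "heavy_block w c y y' q q'" and xo: "x \<notin> {w,c,y,y',q,q'}"
    and xp: "adj x y" "adj x q" "adj x q'" "\<not> adj x y'"
    and ex: "link_arcs x \<le> 10" and no_heavy: "\<forall>u\<in>nbhd x. link_arcs u \<noteq> 16"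
    and z: "z \<in> nbhd x - {y,q,q'}"
  shows "charge z x \<le> 2"
proof (rule ccontr)
  assume "\<not> charge z x \<le> 2"
  moreover have "link_arcs z \<noteq> 16" using no_heavy z by blast
  ultimately have h: "adj z x" "link_arcs z = 14" "card (nbhd x \<inter> nbhd z) \<le> 2" "heavy_nbrs z \<noteq> 0"
    using charge_from_nonheavy[of z x] by (auto split: if_splits)
  have "x \<in> nbhd z" using h(1) by (simp add: in_nbhd_iff adj_sym)
  then obtain w2 c2 z2 m m' where B2: "heavy_block w2 c2 z z2 m m'" and "x \<notin> {w2,c2,z,z2,m,m'}"
    and xm: "adj x m" "adj x m'" and "nbhd z = {w2,c2,m,m',x}" "\<not> adj x w2" "\<not> adj x c2"
    by (rule generous_nbr_blockE[OF h(2,4) _ h(3)])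
  have ports: "{y,q,q'} \<subseteq> nbhd x" using xp by (auto simp: in_nbhd_iff adj_sym)
  have "card {y,q,q'} = 3" using B unfolding heavy_block_def by simp
  then have "card (nbhd x - {y,q,q'}) \<le> 2"
    using ports card_nbhd_le[of x] finite_nbhd by (simp add: card_Diff_subset)
  have "m \<in> {y,q,q'} \<or> m' \<in> {y,q,q'}"
  proof (rule ccontr)
    assume "\<not> ?thesis"
    then have "{z,m,m'} \<subseteq> nbhd x - {y,q,q'}" using z xm by (auto simp: in_nbhd_iff adj_sym)
    moreover have "distinct [z,m,m']" using B2 unfolding heavy_block_def by simp
    ultimately have "3 \<le> card (nbhd x - {y,q,q'})"
      using card_ge_3_if_subset[of z m m' "nbhd x - {y,q,q'}"] finite_nbhd by simp
    then show False using \<open>card (nbhd x - {y,q,q'}) \<le> 2\<close> by simp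
  qed
  moreover have "adj m w2" "adj m' w2" using heavy_block_adj(4,5)[OF B2] by (simp_all add: adj_sym)
  ultimately obtain m0 where m0: "m0 \<in> {y,q,q'}" "adj m0 w2" by blast
  note outer = outer_nbr_of_ports[OF B xo xp(1-3)]
  have "nbhd m0 \<subseteq> {w,c,y,y',q,q',x}" using m0(1) outer by blast
  moreover have "w2 \<in> nbhd m0" using m0(2) by (simp add: in_nbhd_iff adj_sym)
  moreover have "link_arcs w2 = 16" using heavy_block_link_arcs[OF B2] .
  ultimately have "w2 = w \<or> w2 = c" using ports_link_arcs_le_14[OF B] ex by auto
  moreover have "z \<in> nbhd w2" using heavy_block_adj(2)[OF B2] by (simp add: in_nbhd_iff adj_sym)
  moreover have "nbhd w \<union> nbhd c \<subseteq> {w,c,y,y',q,q'}" using B unfolding heavy_block_def by auto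
  ultimately have "z \<in> {w,c,y,y',q,q'}" by blast
  moreover have "adj x z" using z by (simp add: in_nbhd_iff adj_sym)
  ultimately show False using z xp(4) outer(4,5) by auto
qed

lemma received_le_14_if_adj_three_ports:
  assumes B: "heavy_block w c y y' q q'" and xo: "x \<notin> {w,c,y,y',q,q'}"
    and xp: "adj x y" "adj x q" "adj x q'" "\<not> adj x y'"
    and ex: "link_arcs x \<le> 10" and no_heavy: "\<forall>u\<in>nbhd x. link_arcs u \<noteq> 16"
  shows "received x \<le> 14"
proof -
  let ?R = "nbhd x - {y,q,q'}"
  have ports: "{y,q,q'} \<subseteq> nbhd x" using xp by (auto simp: in_nbhd_iff adj_sym)
  have dist: "distinct [y,q,q']" using B unfolding heavy_block_def by simp
  have "heavy_nbrs y \<le> 2" using port_heavy_nbrs_le_2[OF B, of x] xp xo ex by (auto simp: adj_sym)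
  then have from_y: "charge y x \<le> 10"
    using charge_from_nonheavy[of y x] ports_link_arcs_le_14[OF B] by simp
  have "link_arcs p = 12" if "p \<in> {q,q'}" for p
    using that port_nbhd(5)[OF heavy_block_sym(4)[OF B], of x]
      port_nbhd(5)[OF heavy_block_sym(2)[OF heavy_block_sym(4)[OF B]], of x] xo xp
    by (auto simp: adj_sym)
  then have from_q: "charge q x = 0" "charge q' x = 0" using charge_eq_0_unless_14_16 by auto
  have "card ?R \<le> 2" using ports dist card_nbhd_le[of x] finite_nbhd by (simp add: card_Diff_subset)
  then have "(\<Sum>z\<in>?R. charge z x) \<le> 4"
    using sum_mono[of ?R "\<lambda>z. charge z x" "\<lambda>_. 2"] charge_le_2_if_adj_three_ports[OF assms] by simp
  moreover have "received x = charge y x + charge q x + charge q' x + (\<Sum>z\<in>?R. charge z x)"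
    unfolding received_def using sum.subset_diff[OF ports finite_nbhd, of "\<lambda>z. charge z x"] dist
    by (simp add: add_ac)
  ultimately show ?thesis using from_y from_q by simp
qed

text \<open>
  A vertex with T \<le> 10 receives at most 22 from a heavy neighbourhood, at most 10 if no
  neighbour sends more than 2, and otherwise sits next to a heavy block as analysed above.
\<close>

lemma light_vertex_balance:
  assumes ex: "link_arcs x \<le> 10"
  shows "7 * link_arcs x + received x \<le> 96"
proof (cases "\<exists>w\<in>nbhd x. link_arcs w = 16")
  case True
  then show ?thesis using received_le_22_if_heavy_nbr ex by fastforce
next
  case False
  then have no_heavy: "\<forall>w\<in>nbhd x. link_arcs w \<noteq> 16" by blast
  show ?thesis
  proof (cases "\<exists>y\<in>nbhd x. link_arcs y = 14 \<and> card (nbhd x \<inter> nbhd y) \<le> 2 \<and> heavy_nbrs y \<noteq> 0")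
    case True
    then obtain y where y: "y \<in> nbhd x" "link_arcs y = 14" "card (nbhd x \<inter> nbhd y) \<le> 2"
      "heavy_nbrs y \<noteq> 0" by blast
    then obtain w c y' q q' where B: "heavy_block w c y y' q q'" and xo: "x \<notin> {w,c,y,y',q,q'}"
      and "adj x q" "adj x q'" "nbhd y = {w,c,q,q',x}"
      by (metis generous_nbr_blockE in_nbhd_iff adj_sym)
    moreover have "adj x y" using y(1) by (simp add: in_nbhd_iff adj_sym)
    ultimately show ?thesis
      using link_arcs_eq_8_if_adj_all_ports[OF B xo] received_le_40_if_adj_all_ports[OF B xo]
        received_le_14_if_adj_three_ports[OF B xo _ _ _ _ ex no_heavy] ex
      by (cases "adj x y'") fastforce+
  next
    case False
    then have "charge z x \<le> 2" if "z \<in> nbhd x" for z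
      using charge_from_nonheavy[of z x] no_heavy that by auto
    then have "received x \<le> (\<Sum>z\<in>nbhd x. 2)" unfolding received_def by (rule sum_mono)
    also have "\<dots> \<le> 10" using card_nbhd_le[of x] by simp
    finally show ?thesis using ex by simp
  qed
qed

lemma received_if_dense:
  assumes "10 < link_arcs x"
  shows "received x = (if link_arcs x = 16 then 0 else 4 * heavy_nbrs x)"
proof -
  have "charge z x = (if link_arcs z = 16 \<and> link_arcs x \<noteq> 16 then 4 else 0)" if "z \<in> nbhd x" for z
  proof -
    have "\<not> card (nbhd x \<inter> nbhd z) \<le> 2" if "link_arcs z = 14"
      using sparse_nbr_light[OF that] \<open>z \<in> nbhd x\<close> assms by (force simp: in_nbhd_iff adj_sym)
    then show ?thesis using that by (auto simp: charge_def in_nbhd_iff)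
  qed
  then have "received x = (\<Sum>z\<in>nbhd x. if link_arcs z = 16 \<and> link_arcs x \<noteq> 16 then 4 else 0)"
    unfolding received_def by simp
  then show ?thesis
    using sum.inter_filter[OF finite_nbhd[of x], of "\<lambda>_. 4::nat" "\<lambda>z. link_arcs z = 16"]
    unfolding heavy_nbrs_def by simp
qed

lemma heavy_vertex_balance:
  assumes "link_arcs x = 16"
  shows "received x = 0" "16 \<le> sent x"
proof -
  show "received x = 0" using received_if_dense assms by simp
  obtain c a a' b b' where B: "heavy_block x c a a' b b'" using heavy_blockE[OF assms] by blast
  have "4 \<le> charge x p" if "p \<in> {a,a',b,b'}" for p
    using that assms heavy_block_adj[OF B] ports_link_arcs_le_14[OF B] by (auto simp: charge_def)
  then have "(\<Sum>z\<in>{a,a',b,b'}. 4) \<le> (\<Sum>z\<in>{a,a',b,b'}. charge x z)" by (rule sum_mono)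
  also have "\<dots> \<le> sent x" unfolding sent_def
    by (rule sum_mono2[OF finite_nbhd]) (use B in \<open>auto simp: heavy_block_def\<close>)
  finally show "16 \<le> sent x" using B unfolding heavy_block_def by simp
qed

lemma vertex_balance: "7 * link_arcs x + received x \<le> 96 + sent x"
proof -
  have "link_arcs x \<le> 10 \<or> link_arcs x = 12 \<or> link_arcs x = 14 \<or> link_arcs x = 16"
    using link_arcs_le_16[of x] even_link_arcs[of x] by presburger
  then consider "link_arcs x \<le> 10" | "link_arcs x = 12" | "link_arcs x = 14" | "link_arcs x = 16"
    by blast
  then show ?thesis
  proof cases
    case 1
    then show ?thesis using light_vertex_balance by fastforce
  next
    case 2
    then show ?thesis using received_if_dense[of x] heavy_nbrs_le_3[of x] by simp
  next
    case 3
    then obtain q where q: "q \<in> nbhd x" "card (nbhd q \<inter> nbhd x) \<le> 2" by (rule sparse_nbr_exists)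
    then have "charge x q = 2 + 4 * heavy_nbrs x" using 3 by (simp add: charge_def in_nbhd_iff adj_sym)
    moreover have "charge x q \<le> sent x" unfolding sent_def by (rule member_le_sum[OF q(1) _ finite_nbhd]) simp
    ultimately show ?thesis using 3 received_if_dense[of x] by simp
  next
    case 4
    then show ?thesis using heavy_vertex_balance[of x] by simp
  qed
qed

lemma sum_received_eq_sum_sent: "(\<Sum>x\<in>V. received x) = (\<Sum>x\<in>V. sent x)"
proof -
  have "received x = (\<Sum>z\<in>V. charge z x)" for x
    unfolding received_def by (rule sum.mono_neutral_left[OF finite_V]) (auto simp: nbhd_def charge_nonadj)
  moreover have "sent x = (\<Sum>z\<in>V. charge x z)" for x
    unfolding sent_def
    by (rule sum.mono_neutral_left[OF finite_V]) (auto simp: nbhd_def charge_nonadj adj_sym)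
  ultimately show ?thesis using sum.swap[of "\<lambda>x z. charge z x" V V] by simp
qed

lemma sum_link_arcs_le: "7 * (\<Sum>v\<in>V. link_arcs v) \<le> 96 * card V"
proof -
  have "(\<Sum>x\<in>V. 7 * link_arcs x + received x) \<le> (\<Sum>x\<in>V. 96 + sent x)"
    by (rule sum_mono) (rule vertex_balance)
  then show ?thesis
    using sum_received_eq_sum_sent by (simp add: sum.distrib sum_distrib_left)
qed

definition ordered_triangles :: "nat set \<Rightarrow> (nat \<times> nat \<times> nat) set" where
  "ordered_triangles S = {(v,a,b). v \<in> V \<and> a \<in> nbhd v \<and> b \<in> nbhd v \<and> adj a b \<and> {v,a,b} = S}"

lemma card_ordered_triangles:
  assumes "is_clique V E S" "card S = 3"
  shows "card (ordered_triangles S) = 6"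
proof -
  obtain x y z where S: "S = {x,y,z}" and d: "x \<noteq> y" "y \<noteq> z" "x \<noteq> z"
    using assms(2) by (metis card_3_iff)
  then have "adj x y" "adj x z" "adj y z" "x \<in> V" "y \<in> V" "z \<in> V"
    using assms(1) unfolding is_clique_def adj_def by auto
  then have "ordered_triangles S = {(x,y,z),(x,z,y),(y,x,z),(y,z,x),(z,x,y),(z,y,x)}"
  proof (intro equalityI subsetI)
    fix t assume "t \<in> ordered_triangles S"
    then obtain v a b where t: "t = (v,a,b)" and h: "a \<in> nbhd v" "b \<in> nbhd v" "adj a b" "{v,a,b} = {x,y,z}"
      unfolding ordered_triangles_def S by auto
    have "v \<noteq> a" "v \<noteq> b" "a \<noteq> b" using h adj_ne by (auto simp: in_nbhd_iff)
    moreover have "v \<in> {x,y,z}" "a \<in> {x,y,z}" "b \<in> {x,y,z}" using h(4) by blast+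
    ultimately show "t \<in> {(x,y,z),(x,z,y),(y,x,z),(y,z,x),(z,x,y),(z,y,x)}" using t by auto
  qed (auto simp: ordered_triangles_def S in_nbhd_iff adj_sym insert_commute)
  then show ?thesis using d by simp
qed

lemma sum_link_arcs_eq_triangles: "(\<Sum>v\<in>V. link_arcs v) = 6 * k_count 3 V E"
proof -
  let ?T = "Sigma V (\<lambda>v. {(a,b). a \<in> nbhd v \<and> b \<in> nbhd v \<and> adj a b})"
  let ?K = "{S. is_clique V E S \<and> card S = 3}"
  have "finite {(a,b). a \<in> nbhd v \<and> b \<in> nbhd v \<and> adj a b}" for v
    by (rule finite_subset[of _ "nbhd v \<times> nbhd v"]) (auto simp: finite_nbhd)
  then have "(\<Sum>v\<in>V. link_arcs v) = card ?T" using finite_V by (simp add: arcs_def)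
  also have "?T = (\<Union>S\<in>?K. ordered_triangles S)"
  proof (intro equalityI subsetI)
    fix t assume "t \<in> ?T"
    then obtain v a b where t: "t = (v,a,b)" "v \<in> V" "adj a v" "adj b v" "adj a b"
      by (auto simp: in_nbhd_iff)
    then have "is_clique V E {v,a,b}"
      unfolding is_clique_def adj_def[symmetric] using adj_in_V by (auto simp: adj_sym)
    moreover have "a \<noteq> v" "b \<noteq> v" "a \<noteq> b" using t(3-5) adj_ne by blast+
    then have "card {v,a,b} = 3" by simp
    ultimately show "t \<in> (\<Union>S\<in>?K. ordered_triangles S)"
      using t by (auto simp: ordered_triangles_def in_nbhd_iff)
  qed (auto simp: ordered_triangles_def)
  also have "card \<dots> = (\<Sum>S\<in>?K. card (ordered_triangles S))"
  proof (rule card_UN_disjoint)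
    show "finite ?K" by (rule finite_subset[of _ "Pow V"]) (auto simp: is_clique_def finite_V)
    have "ordered_triangles S \<subseteq> V \<times> V \<times> V" for S
      by (auto simp: ordered_triangles_def nbhd_def)
    then show "\<forall>S\<in>?K. finite (ordered_triangles S)" using finite_V by (meson finite_SigmaI finite_subset)
  qed (auto simp: ordered_triangles_def)
  also have "\<dots> = 6 * card ?K" using card_ordered_triangles by simp
  finally show ?thesis unfolding k_count_def .
qed

lemma triangle_count_le: "7 * k_count 3 V E \<le> 16 * card V"
  using sum_link_arcs_le sum_link_arcs_eq_triangles by simp

end

lemma rho_3_le:
  assumes "graph_class 5 4 V E" "card V \<ge> 1"
  shows "rho 3 V E \<le> 16 / 7"
proof -
  interpret graph_deg5_clique4 V E using assms(1) by unfold_locales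
  have "7 * k_count 3 V E \<le> 16 * card V" by (rule triangle_count_le)
  then have "7 * real (k_count 3 V E) \<le> 16 * real (card V)" by (metis of_nat_le_iff of_nat_mult of_nat_numeral)
  moreover have "real (card V) > 0" using assms(2) by simp
  ultimately show ?thesis unfolding rho_def by (simp add: divide_le_eq field_simps)
qed

section \<open>The extremal graph G*\<close>

definition Gstar_adj :: "nat \<Rightarrow> nat \<Rightarrow> bool" where
  "Gstar_adj u v \<longleftrightarrow> u \<noteq> v \<and> u \<le> 6 \<and> v \<le> 6
     \<and> {u,v} \<noteq> {0,1} \<and> {u,v} \<noteq> {2,3} \<and> {u,v} \<noteq> {4,6} \<and> {u,v} \<noteq> {5,6}"

lemma le_6_cases: "(u::nat) \<le> 6 \<Longrightarrow> u = 0 \<or> u = 1 \<or> u = 2 \<or> u = 3 \<or> u = 4 \<or> u = 5 \<or> u = 6"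
  by auto

lemma Gstar_E_iff: "{u,v} \<in> Gstar_E \<longleftrightarrow> Gstar_adj u v"
proof
  assume "{u,v} \<in> Gstar_E"
  then show "Gstar_adj u v"
    unfolding Gstar_E_def
    by (elim UnE CollectE exE conjE) (simp_all add: doubleton_eq_iff Gstar_adj_def, auto)
next
  assume adj: "Gstar_adj u v"
  then have "(u \<le> 5 \<and> v \<le> 5) \<or> (u = 6 \<and> v \<le> 3) \<or> (v = 6 \<and> u \<le> 3)"
    unfolding Gstar_adj_def by (simp add: doubleton_eq_iff) arith
  moreover have "{u,v} \<in> Gstar_E" if "u \<le> 5" "v \<le> 5"
    using that adj unfolding Gstar_E_def Gstar_adj_def by (intro UnI1 CollectI exI[of _ u] exI[of _ v]) simp
  moreover have apex: "{6,b} \<in> Gstar_E" if "b \<le> 3" for b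
    using that unfolding Gstar_E_def by (intro UnI2 CollectI exI[of _ b]) auto
  ultimately show "{u,v} \<in> Gstar_E" by (auto simp: insert_commute)
qed

lemma Gstar_simple: "simple_graph Gstar_V Gstar_E"
proof -
  have "e \<subseteq> {0..6} \<and> card e = 2" if "e \<in> Gstar_E" for e
    using that unfolding Gstar_E_def by (elim UnE CollectE exE conjE) auto
  then show ?thesis unfolding simple_graph_def Gstar_V_def by simp
qed

lemma Gstar_nbhd: "{u \<in> Gstar_V. {u,v} \<in> Gstar_E} = {u. u \<le> 6 \<and> Gstar_adj u v}"
  unfolding Gstar_V_def Gstar_E_iff by auto

lemma Gstar_nbhd_explicit:
  "{u. u \<le> 6 \<and> Gstar_adj u 0} = {2,3,4,5,6}" "{u. u \<le> 6 \<and> Gstar_adj u 1} = {2,3,4,5,6}"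
  "{u. u \<le> 6 \<and> Gstar_adj u 2} = {0,1,4,5,6}" "{u. u \<le> 6 \<and> Gstar_adj u 3} = {0,1,4,5,6}"
  "{u. u \<le> 6 \<and> Gstar_adj u 4} = {0,1,2,3,5}" "{u. u \<le> 6 \<and> Gstar_adj u 5} = {0,1,2,3,4}"
  "{u. u \<le> 6 \<and> Gstar_adj u 6} = {0,1,2,3}"
proof -
  have enum: "{u. u \<le> 6 \<and> P u} = {u \<in> {0,1,2,3,4,5,6}. P u}" for P :: "nat \<Rightarrow> bool"
    using le_6_cases by fastforce
  have filter_insert: "{u \<in> insert a A. P u} = (if P a then insert a {u \<in> A. P u} else {u \<in> A. P u})"
    for a A P by auto
  show "{u. u \<le> 6 \<and> Gstar_adj u 0} = {2,3,4,5,6}" "{u. u \<le> 6 \<and> Gstar_adj u 1} = {2,3,4,5,6}"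
    "{u. u \<le> 6 \<and> Gstar_adj u 2} = {0,1,4,5,6}" "{u. u \<le> 6 \<and> Gstar_adj u 3} = {0,1,4,5,6}"
    "{u. u \<le> 6 \<and> Gstar_adj u 4} = {0,1,2,3,5}" "{u. u \<le> 6 \<and> Gstar_adj u 5} = {0,1,2,3,4}"
    "{u. u \<le> 6 \<and> Gstar_adj u 6} = {0,1,2,3}"
    unfolding enum filter_insert by (simp_all add: Gstar_adj_def doubleton_eq_iff)
qed

lemma Gstar_max_degree: "max_degree_le Gstar_V Gstar_E 5"
  unfolding max_degree_le_def degree_def Gstar_nbhd
proof
  fix v assume "v \<in> Gstar_V"
  then have "v = 0 \<or> v = 1 \<or> v = 2 \<or> v = 3 \<or> v = 4 \<or> v = 5 \<or> v = 6"
    using le_6_cases by (simp add: Gstar_V_def)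
  then show "card {u. u \<le> 6 \<and> Gstar_adj u v} \<le> 5"
    by (elim disjE) (simp_all only: Gstar_nbhd_explicit, simp_all)
qed

text \<open>Every clique meets each of the classes {0,1}, {2,3}, {4,6}, {5} at most once.\<close>

lemma Gstar_clique_number: "clique_number_le Gstar_V Gstar_E 4"
  unfolding clique_number_le_def
proof (intro allI impI)
  fix S assume "is_clique Gstar_V Gstar_E S"
  then have S6: "\<forall>u\<in>S. u \<le> 6" and adj: "\<forall>u\<in>S. \<forall>v\<in>S. u \<noteq> v \<longrightarrow> Gstar_adj u v"
    unfolding is_clique_def Gstar_V_def Gstar_E_iff by auto
  define f :: "nat \<Rightarrow> nat" where
    "f u = (if u \<le> 1 then 0 else if u \<le> 3 then 1 else if u = 5 then 3 else 2)" for u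
  have "inj_on f S"
  proof (rule inj_onI, rule ccontr)
    fix u v assume uv: "u \<in> S" "v \<in> S" "f u = f v" "u \<noteq> v"
    then have "Gstar_adj u v" using adj by auto
    moreover have "u = 0 \<or> u = 1 \<or> u = 2 \<or> u = 3 \<or> u = 4 \<or> u = 5 \<or> u = 6"
      "v = 0 \<or> v = 1 \<or> v = 2 \<or> v = 3 \<or> v = 4 \<or> v = 5 \<or> v = 6"
      using S6 uv le_6_cases by blast+
    ultimately show False using uv(3,4) by (elim disjE) (simp_all add: f_def Gstar_adj_def doubleton_eq_iff)
  qed
  moreover have "f ` S \<subseteq> {0,1,2,3}" unfolding f_def by auto
  ultimately have "card S \<le> card {0::nat,1,2,3}" by (meson card_inj_on_le finite.emptyI finite_insert)
  then show "card S \<le> 4" by simp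
qed

lemma Gstar_class: "graph_class 5 4 Gstar_V Gstar_E"
  unfolding graph_class_def using Gstar_simple Gstar_max_degree Gstar_clique_number by simp

lemma Gstar_triangles: "k_count 3 Gstar_V Gstar_E = 16"
proof -
  interpret G: graph_deg5_clique4 Gstar_V Gstar_E by unfold_locales (rule Gstar_class)
  have adj: "G.adj u v = Gstar_adj u v" for u v by (simp add: G.adj_def Gstar_E_iff)
  have "G.nbhd v = {u. u \<le> 6 \<and> Gstar_adj u v}" for v
    unfolding G.nbhd_def G.adj_def using Gstar_nbhd by simp
  then have N: "G.nbhd 0 = {2,3,4,5,6}" "G.nbhd 1 = {2,3,4,5,6}" "G.nbhd 2 = {0,1,4,5,6}"
    "G.nbhd 3 = {0,1,4,5,6}" "G.nbhd 4 = {0,1,2,3,5}" "G.nbhd 5 = {0,1,2,3,4}" "G.nbhd 6 = {0,1,2,3}"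
    by (simp_all only: Gstar_nbhd_explicit)
  note count = adj Gstar_adj_def doubleton_eq_iff
  have "G.link_arcs 0 = 14" "G.link_arcs 1 = 14"
    unfolding N using G.arcs_list[of "[2,3,4,5,6]"] by (simp_all add: count)
  moreover have "G.link_arcs 2 = 14" "G.link_arcs 3 = 14"
    unfolding N using G.arcs_list[of "[0,1,4,5,6]"] by (simp_all add: count)
  moreover have "G.link_arcs 4 = 16" unfolding N using G.arcs_list[of "[0,1,2,3,5]"] by (simp add: count)
  moreover have "G.link_arcs 5 = 16" unfolding N using G.arcs_list[of "[0,1,2,3,4]"] by (simp add: count)
  moreover have "G.link_arcs 6 = 8" unfolding N using G.arcs_list[of "[0,1,2,3]"] by (simp add: count)
  moreover have V: "Gstar_V = {0,1,2,3,4,5,6}" unfolding Gstar_V_def by auto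
  have "(\<Sum>v\<in>Gstar_V. G.link_arcs v) = G.link_arcs 0 + G.link_arcs 1 + G.link_arcs 2
      + G.link_arcs 3 + G.link_arcs 4 + G.link_arcs 5 + G.link_arcs 6"
    unfolding V by simp
  ultimately have "(\<Sum>v\<in>Gstar_V. G.link_arcs v) = 96" by simp
  then show ?thesis using G.sum_link_arcs_eq_triangles by simp
qed

theorem mainTheorem19:
  shows "graph_class 5 4 Gstar_V Gstar_E \<and> f_sup 3 5 4 = 16 / 7 \<and> rho 3 Gstar_V Gstar_E = 16 / 7"
proof -
  have "card Gstar_V = 7" unfolding Gstar_V_def by simp
  then have rho_Gstar: "rho 3 Gstar_V Gstar_E = 16 / 7" unfolding rho_def using Gstar_triangles by simp
  have "Sup {rho 3 V E | V E. graph_class 5 4 V E \<and> card V \<ge> 1} = 16 / 7"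
  proof (rule cSup_eq_maximum)
    show "16 / 7 \<in> {rho 3 V E | V E. graph_class 5 4 V E \<and> card V \<ge> 1}"
      using rho_Gstar Gstar_class \<open>card Gstar_V = 7\<close> by (metis (mono_tags, lifting) mem_Collect_eq one_le_numeral)
    fix r assume "r \<in> {rho 3 V E | V E. graph_class 5 4 V E \<and> card V \<ge> 1}"
    then show "r \<le> 16 / 7" using rho_3_le by blast
  qed
  then show ?thesis using rho_Gstar Gstar_class unfolding f_sup_def by simp
qed

end
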